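(* For every integer $k\ge 1$, the triangulane $T_k$ satisfies $$SO(T_k)=\big(36(2^{k-1}-1)+6\cdot 2^{k-1}+12\big)\sqrt{2}+6\cdot 2^k\sqrt{5}.$$
   Context: For a finite simple graph $G$, $SO(G)=\sum_{uv\in E(G)}\sqrt{d_u^2+d_v^2}$, where $d_u$ is the degree of $u$ in $G$ (the Sombor index). The circuit of pairwise disjoint graphs $H_1,H_2,H_3$ with respect to vertices $z_i\in V(H_i)$ is obtained from their disjoint union and a triangle $C_3$ with vertices $c_1,c_2,c_3$ by identifying $z_i$ with $c_i$ for each $i$. Define rooted graphs $G_k$ recursively: $G_1$ is a triangle with a distinguished vertex $y_1$; for $k\ge 2$, $G_k$ is the circuit of two disjoint copies of $G_{k-1}$ (with respect to their vertices $y_{k-1}$) and $K_1$ (with respect to its single vertex), and $y_k$ is the vertex where $K_1$ was placed. The triangulane $T_k$ is the circuit of three disjoint copies of $G_k$ with respect to their vertices $y_k$. *)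

theory Defs
  imports Complex_Main
begin

text \<open>Finite simple graphs with vertices addressed by lists of naturals;
  an edge is a two-element set of vertices.\<close>

type_synonym vert = "nat list"
type_synonym graph = "vert set \<times> vert set set"

definition verts :: "graph \<Rightarrow> vert set" where "verts G = fst G"
definition edges :: "graph \<Rightarrow> vert set set" where "edges G = snd G"

definition degree :: "graph \<Rightarrow> vert \<Rightarrow> nat" where
  "degree G v = card {e \<in> edges G. v \<in> e}"

text \<open>Sombor index: sum over edges uv of sqrt(d_u^2 + d_v^2); for an edge e = {u,v}
  (u \<noteq> v) the radicand is the sum of the squared degrees of the two endpoints.\<close>
definition sombor :: "graph \<Rightarrow> real" where
  "sombor G = (\<Sum>e\<in>edges G. sqrt (\<Sum>v\<in>e. (real (degree G v))^2))"

text \<open>Circuit of H1,H2,H3 w.r.t. z1,z2,z3: disjoint union (copy i is tagged by prefixing i)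
  plus a triangle on the three (tagged) root vertices.\<close>
definition circuit :: "graph \<Rightarrow> vert \<Rightarrow> graph \<Rightarrow> vert \<Rightarrow> graph \<Rightarrow> vert \<Rightarrow> graph" where
  "circuit H1 z1 H2 z2 H3 z3 =
    ((Cons 0 ` verts H1) \<union> (Cons 1 ` verts H2) \<union> (Cons 2 ` verts H3),
     ((`) (Cons 0) ` edges H1) \<union> ((`) (Cons 1) ` edges H2) \<union> ((`) (Cons 2) ` edges H3)
       \<union> {{0 # z1, 1 # z2}, {1 # z2, 2 # z3}, {0 # z1, 2 # z3}})"

definition K1 :: graph where "K1 = ({[]}, {})"

definition triangle :: graph where
  "triangle = ({[0], [1], [2]}, {{[0],[1]}, {[1],[2]}, {[0],[2]}})"

text \<open>Rooted graphs (G_k, y_k) for k \<ge> 1 (index 0 is an unused dummy).\<close>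
fun Gk :: "nat \<Rightarrow> graph" where
  "Gk 0 = ({}, {})"
| "Gk (Suc 0) = triangle"
| "Gk (Suc (Suc n)) = circuit (Gk (Suc n)) (if n = 0 then [0] else [2])
                              (Gk (Suc n)) (if n = 0 then [0] else [2]) K1 []"

fun yk :: "nat \<Rightarrow> vert" where
  "yk 0 = []"
| "yk (Suc 0) = [0]"
| "yk (Suc (Suc n)) = [2]"

lemma yk_Suc: "yk (Suc n) = (if n = 0 then [0] else [2])"
  by (cases n) auto

definition triangulane :: "nat \<Rightarrow> graph" where
  "triangulane k = circuit (Gk k) (yk k) (Gk k) (yk k) (Gk k) (yk k)"

end

theory Submission
  imports Defs
begin

(* In a circuit every vertex of a constituent H_i keeps its degree, except the root z_i,
   which gains two neighbours from the triangle. Hence the Sombor index of a circuit splits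
   into the contributions of the H_i, computed with the degrees of their roots raised by 2,
   plus the three triangle edges. Let R_k(d) be the contribution of G_k when its root (of
   degree 2) has d further neighbours. Then
     R_1(d) = 2 sqrt((2+d)^2 + 4) + sqrt 8,
     R_(k+1)(d) = 2 R_k(2) + 2 sqrt(16 + (2+d)^2) + sqrt 32,
     SO(T_k) = 3 R_k(2) + 3 sqrt 32,
   and the linear recurrence for R_k(2) solves to
     R_k(2) = 2^(k-1) (4 sqrt 5 + 14 sqrt 2) - 12 sqrt 2. *)

lemma Cons_mem_image_Cons [simp]: "i # v \<in> Cons j ` e \<longleftrightarrow> i = j \<and> v \<in> e"
  by auto

lemma image_Cons_eq_image_Cons_iff [simp]:
  "Cons i ` x = Cons j ` y \<longleftrightarrow> x = y \<and> (i = j \<or> x = {})"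
proof
  assume eq: "Cons i ` x = Cons j ` y"
  show "x = y \<and> (i = j \<or> x = {})"
  proof (cases "x = {}")
    case True
    with eq show ?thesis by simp
  next
    case False
    then obtain a where "a \<in> x" by blast
    then have "i # a \<in> Cons j ` y" using eq by blast
    then have "i = j" by simp
    with eq show ?thesis by (simp add: inj_image_eq_iff)
  qed
qed auto

lemma doubleton_notin_image_image_Cons:
  assumes "a \<noteq> b"
  shows "{a # u, b # u'} \<notin> (`) (Cons i) ` E"
proof
  assume "{a # u, b # u'} \<in> (`) (Cons i) ` E"
  then obtain x where x: "{a # u, b # u'} = Cons i ` x" by blast
  have "a # u \<in> Cons i ` x" "b # u' \<in> Cons i ` x"
    unfolding x[symmetric] by simp_all
  with assms show False by simp
qed

lemma sum_image_Cons: "(\<Sum>v\<in>Cons i ` e. f v) = (\<Sum>v\<in>e. f (i # v))"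
  by (simp add: sum.reindex)

lemma edges_circuit:
  "edges (circuit H1 z1 H2 z2 H3 z3) =
     (`) (Cons 0) ` edges H1 \<union> (`) (Cons 1) ` edges H2 \<union> (`) (Cons 2) ` edges H3
     \<union> {{0 # z1, 1 # z2}, {1 # z2, 2 # z3}, {0 # z1, 2 # z3}}"
  by (simp add: circuit_def edges_def)

lemma finite_edges_circuit:
  "finite (edges H1) \<Longrightarrow> finite (edges H2) \<Longrightarrow> finite (edges H3) \<Longrightarrow>
   finite (edges (circuit H1 z1 H2 z2 H3 z3))"
  by (simp add: edges_circuit)

(* The copies of H1, H2, H3 can only share the empty edge, whence g {} = 0. *)

lemma sum_edges_circuit:
  fixes g :: "vert set \<Rightarrow> 'a::comm_monoid_add"
  assumes "finite (edges H1)" "finite (edges H2)" "finite (edges H3)" and "g {} = 0"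
  shows "(\<Sum>e\<in>edges (circuit H1 z1 H2 z2 H3 z3). g e) =
    (\<Sum>e\<in>edges H1. g (Cons 0 ` e)) + (\<Sum>e\<in>edges H2. g (Cons 1 ` e))
    + (\<Sum>e\<in>edges H3. g (Cons 2 ` e)) + g {0 # z1, 1 # z2} + g {1 # z2, 2 # z3} + g {0 # z1, 2 # z3}"
proof -
  let ?A0 = "(`) (Cons 0) ` edges H1" and ?A1 = "(`) (Cons 1) ` edges H2"
    and ?A2 = "(`) (Cons 2) ` edges H3"
    and ?T = "{{0 # z1, 1 # z2}, {1 # z2, 2 # z3}, {0 # z1, 2 # z3}} :: vert set set"
  have "(\<Sum>e\<in>edges (circuit H1 z1 H2 z2 H3 z3). g e) = sum g (?A0 \<union> ?A1 \<union> ?A2) + sum g ?T"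
    unfolding edges_circuit using assms(1-3)
    by (intro sum.union_disjoint) (simp_all add: Int_Un_distrib2 doubleton_notin_image_image_Cons)
  also have "sum g (?A0 \<union> ?A1 \<union> ?A2) = sum g (?A0 \<union> ?A1) + sum g ?A2"
    using assms by (intro sum.union_inter_neutral) auto
  also have "sum g (?A0 \<union> ?A1) = sum g ?A0 + sum g ?A1"
    using assms by (intro sum.union_inter_neutral) auto
  finally show ?thesis
    by (simp add: sum.reindex inj_on_image doubleton_eq_iff add.assoc)
qed

lemma degree_eq_sum:
  "finite (edges G) \<Longrightarrow> degree G v = (\<Sum>e\<in>edges G. if v \<in> e then 1 else 0)"
  by (simp add: degree_def sum.inter_filter[symmetric])

lemma degree_circuit:
  assumes "finite (edges H1)" "finite (edges H2)" "finite (edges H3)"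
  shows "degree (circuit H1 z1 H2 z2 H3 z3) (0 # v) = degree H1 v + (if v = z1 then 2 else 0)"
    and "degree (circuit H1 z1 H2 z2 H3 z3) (1 # v) = degree H2 v + (if v = z2 then 2 else 0)"
    and "degree (circuit H1 z1 H2 z2 H3 z3) (2 # v) = degree H3 v + (if v = z3 then 2 else 0)"
  using assms by (simp_all add: degree_eq_sum finite_edges_circuit sum_edges_circuit)

(* The contribution of the edges of G to the Sombor index of a graph that contains G
   and in which every vertex v has w v further neighbours outside G. *)

definition sombor_shifted :: "graph \<Rightarrow> (vert \<Rightarrow> real) \<Rightarrow> real" where
  "sombor_shifted G w = (\<Sum>e\<in>edges G. sqrt (\<Sum>v\<in>e. (real (degree G v) + w v)^2))"

lemma sombor_eq_sombor_shifted: "sombor G = sombor_shifted G (\<lambda>_. 0)"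
  by (simp add: sombor_def sombor_shifted_def)

lemma sombor_shifted_circuit:
  fixes w :: "vert \<Rightarrow> real" and z1 z2 z3 :: vert
  assumes "finite (edges H1)" "finite (edges H2)" "finite (edges H3)"
  defines "d1 \<equiv> real (degree H1 z1) + 2 + w (0 # z1)"
    and "d2 \<equiv> real (degree H2 z2) + 2 + w (1 # z2)"
    and "d3 \<equiv> real (degree H3 z3) + 2 + w (2 # z3)"
  shows "sombor_shifted (circuit H1 z1 H2 z2 H3 z3) w =
      sombor_shifted H1 (\<lambda>v. w (0 # v) + (if v = z1 then 2 else 0))
    + sombor_shifted H2 (\<lambda>v. w (1 # v) + (if v = z2 then 2 else 0))
    + sombor_shifted H3 (\<lambda>v. w (2 # v) + (if v = z3 then 2 else 0))
    + sqrt (d1\<^sup>2 + d2\<^sup>2) + sqrt (d2\<^sup>2 + d3\<^sup>2) + sqrt (d1\<^sup>2 + d3\<^sup>2)"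
proof -
  have real_if: "real (if c then 2 else 0) = (if c then 2 else 0)" for c by simp
  show ?thesis
    using assms(1-3) unfolding d1_def d2_def d3_def sombor_shifted_def
    by (simp add: sum_edges_circuit sum_image_Cons degree_circuit[simplified] real_if add_ac)
qed

lemma edges_K1 [simp]: "edges K1 = {}"
  by (simp add: K1_def edges_def)

lemma degree_K1 [simp]: "degree K1 v = 0"
  by (simp add: degree_def)

lemma sombor_shifted_K1 [simp]: "sombor_shifted K1 w = 0"
  by (simp add: sombor_shifted_def)

lemma triangle_eq_circuit_K1: "triangle = circuit K1 [] K1 [] K1 []"
  by (auto simp: triangle_def circuit_def K1_def verts_def edges_def)

lemma Gk_Suc: "k \<ge> 1 \<Longrightarrow> Gk (Suc k) = circuit (Gk k) (yk k) (Gk k) (yk k) K1 []"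
  by (cases k) (auto simp: yk_Suc)

lemma yk_Suc_of_ge_1: "k \<ge> 1 \<Longrightarrow> yk (Suc k) = 2 # []"
  by (cases k) auto

lemma finite_edges_Gk: "finite (edges (Gk k))"
  by (induction k rule: Gk.induct)
    (simp_all add: finite_edges_circuit triangle_eq_circuit_K1 edges_def[of "({}, {})"])

lemma degree_Gk_root: "k \<ge> 1 \<Longrightarrow> degree (Gk k) (yk k) = 2"
  by (cases k rule: Gk.cases) (simp_all add: triangle_eq_circuit_K1 degree_circuit finite_edges_Gk)

definition Gk_root_sombor :: "nat \<Rightarrow> real \<Rightarrow> real" where
  "Gk_root_sombor k \<delta> = sombor_shifted (Gk k) (\<lambda>v. if v = yk k then \<delta> else 0)"

lemma Gk_root_sombor_1: "Gk_root_sombor 1 \<delta> = 2 * sqrt ((2 + \<delta>)\<^sup>2 + 4) + sqrt 8"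
  by (simp add: Gk_root_sombor_def triangle_eq_circuit_K1 sombor_shifted_circuit add_ac)

lemma Gk_root_sombor_Suc:
  assumes "k \<ge> 1"
  shows "Gk_root_sombor (Suc k) \<delta> = 2 * Gk_root_sombor k 2 + 2 * sqrt (16 + (2 + \<delta>)\<^sup>2) + sqrt 32"
  using assms
  by (simp add: Gk_root_sombor_def Gk_Suc yk_Suc_of_ge_1 sombor_shifted_circuit finite_edges_Gk
      degree_Gk_root)

lemma sombor_triangulane:
  assumes "k \<ge> 1"
  shows "sombor (triangulane k) = 3 * Gk_root_sombor k 2 + 3 * sqrt 32"
  using assms
  by (simp add: sombor_eq_sombor_shifted triangulane_def sombor_shifted_circuit finite_edges_Gk
      degree_Gk_root Gk_root_sombor_def)

lemma Gk_root_sombor_closed: "Gk_root_sombor (Suc n) 2 = 2 ^ n * (4 * sqrt 5 + 14 * sqrt 2) - 12 * sqrt 2"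
proof (induction n)
  case 0
  have "sqrt 20 = 2 * sqrt 5" "sqrt 8 = 2 * sqrt 2"
    using real_sqrt_mult[of 4 5] real_sqrt_mult[of 4 2] by simp_all
  with Gk_root_sombor_1[of 2] show ?case
    by simp
next
  case (Suc n)
  have "sqrt 32 = 4 * sqrt 2"
    using real_sqrt_mult[of 16 2] by simp
  then show ?case
    using Suc by (simp add: Gk_root_sombor_Suc algebra_simps)
qed

theorem mainTheorem11:
  fixes k :: nat
  assumes "k \<ge> 1"
  shows "sombor (triangulane k) =
    (36 * (2 ^ (k - 1) - 1) + 6 * 2 ^ (k - 1) + 12) * sqrt 2 + 6 * 2 ^ k * sqrt 5"
proof -
  obtain n where k: "k = Suc n"
    using assms by (cases k) auto
  have "sqrt 32 = 4 * sqrt 2"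
    using real_sqrt_mult[of 16 2] by simp
  then show ?thesis
    by (simp add: k sombor_triangulane Gk_root_sombor_closed algebra_simps)
qed

end
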